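(* Let $\pi\in\mathfrak{S}_m$. If $\pi_1=1$, $\pi_m=m$, and $|\mathcal{O}_\pi|=2$, then $\pi$ and its reversal $\pi^R=\pi_m\pi_{m-1}\cdots\pi_1$ are super-strongly c-Wilf equivalent.
   Context: The standardization $\operatorname{st}(w)$ of a word of distinct integers replaces its smallest entry by 1, the next smallest by 2, etc. For $\pi\in\mathfrak{S}_m$ and $\sigma\in\mathfrak{S}_n$, $\operatorname{Em}(\pi,\sigma)=\{i\in[n-m+1]:\operatorname{st}(\sigma_i\cdots\sigma_{i+m-1})=\pi\}$. For a set $S$ of positive integers, $a^\pi_{n,S}$ is the number of $\sigma\in\mathfrak{S}_n$ with $\operatorname{Em}(\pi,\sigma)=S$; $\pi,\tau$ are super-strongly c-Wilf equivalent if $a^\pi_{n,S}=a^\tau_{n,S}$ for all $n,S$. The overlap set is $\mathcal{O}_\pi=\{i\in[m-1]:\operatorname{st}(\pi_{i+1}\cdots\pi_m)=\operatorname{st}(\pi_1\cdots\pi_{m-i})\}$. *)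

theory Defs
  imports Main
begin

text \<open>Permutations of [m] are represented as lists of naturals (one-line notation),
  positions are 1-indexed in the paper and translated to 0-indexed list access.\<close>

definition is_perm :: "nat \<Rightarrow> nat list \<Rightarrow> bool" where
  "is_perm m p \<longleftrightarrow> length p = m \<and> distinct p \<and> set p = {1..m}"

definition st :: "nat list \<Rightarrow> nat list" where
  "st w = map (\<lambda>x. card {y \<in> set w. y < x} + 1) w"

definition Em :: "nat list \<Rightarrow> nat list \<Rightarrow> nat set" where
  "Em p s = {i. 1 \<le> i \<and> i + length p \<le> length s + 1
                 \<and> st (take (length p) (drop (i - 1) s)) = p}"

definition a_count :: "nat list \<Rightarrow> nat \<Rightarrow> nat set \<Rightarrow> nat" where
  "a_count p n S = card {s. is_perm n s \<and> Em p s = S}"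

definition super_strongly_cWilf_equiv :: "nat list \<Rightarrow> nat list \<Rightarrow> bool" where
  "super_strongly_cWilf_equiv p q \<longleftrightarrow> (\<forall>n S. a_count p n S = a_count q n S)"

definition overlap_set :: "nat list \<Rightarrow> nat set" where
  "overlap_set p = {i. 1 \<le> i \<and> i \<le> length p - 1 \<and>
                      st (drop i p) = st (take (length p - i) p)}"

end

theory Submission
  imports Defs
begin

text \<open>Write \<open>\<pi>\<^sup>r\<^sup>c\<close> for the reverse-complement of \<open>\<pi>\<close>. Complementing \<open>\<sigma>\<close> turns
  occurrences of \<open>\<pi>\<^sup>R\<close> into occurrences of \<open>\<pi>\<^sup>r\<^sup>c\<close>, and by Moebius inversion over sets of
  positions it suffices to show that, for every set \<open>T\<close>, as many permutations have occurrences
  of \<open>\<pi>\<close> at all positions of \<open>T\<close> as of \<open>\<pi>\<^sup>r\<^sup>c\<close>.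
  Since the only overlap of \<open>\<pi>\<close> besides \<open>m - 1\<close> is at a single shift \<open>k\<close>, such a \<open>T\<close> splits into
  maximal chains \<open>a, a + k, \<dots>, a + (r - 1) k\<close> whose segments meet other occurrences in at most an
  endpoint. As \<open>\<pi>\<^sub>1 = 1\<close> and \<open>\<pi>\<^sub>m = m\<close>, the segment covered by a chain starts with its minimum and
  ends with its maximum; reverse-complementing it within its own values therefore fixes both
  endpoints, turns the chain's occurrences of \<open>\<pi>\<close> into occurrences of \<open>\<pi>\<^sup>r\<^sup>c\<close> and leaves every
  other occurrence intact. Flipping the chains one at a time is a bijection.\<close>

lemma card_eq_by_involution:
  assumes "f ` A \<subseteq> B" "f ` B \<subseteq> A" "\<forall>x\<in>A. f (f x) = x" "\<forall>x\<in>B. f (f x) = x"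
  shows "card A = card B"
  using bij_betw_byWitness[OF assms(3,4,1,2)] by (rule bij_betw_same_card)

lemma card_supsets_eq_sum:
  fixes G :: "'a \<Rightarrow> 'b set"
  assumes "finite X" "finite U" "\<forall>s\<in>X. G s \<subseteq> U"
  shows "card {s\<in>X. T \<subseteq> G s} = (\<Sum>S\<in>{S. T \<subseteq> S \<and> S \<subseteq> U}. card {s\<in>X. G s = S})"
proof -
  have "{s\<in>X. T \<subseteq> G s} = (\<Union>S\<in>{S. T \<subseteq> S \<and> S \<subseteq> U}. {s\<in>X. G s = S})"
    using assms(3) by auto
  also have "card \<dots> = (\<Sum>S\<in>{S. T \<subseteq> S \<and> S \<subseteq> U}. card {s\<in>X. G s = S})"
    using assms(1,2) by (intro card_UN_disjoint) (auto intro: finite_subset[of _ "Pow U"])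
  finally show ?thesis .
qed

text \<open>Moebius inversion on the subsets of \<open>U\<close>.\<close>
lemma card_fibres_eq_if_card_supsets_eq:
  fixes G1 G2 :: "'a \<Rightarrow> 'b set"
  assumes "finite X" "finite U" "\<forall>s\<in>X. G1 s \<subseteq> U" "\<forall>s\<in>X. G2 s \<subseteq> U"
    "\<forall>T\<subseteq>U. card {s\<in>X. T \<subseteq> G1 s} = card {s\<in>X. T \<subseteq> G2 s}"
  shows "card {s\<in>X. G1 s = S} = card {s\<in>X. G2 s = S}"
proof (cases "S \<subseteq> U")
  case True
  then show ?thesis
  proof (induction "card (U - S)" arbitrary: S rule: less_induct)
    case less
    let ?I = "{S'. S \<subseteq> S' \<and> S' \<subseteq> U} - {S}"
    have fin: "finite {S'. S \<subseteq> S' \<and> S' \<subseteq> U}"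
      using assms(2) by (auto intro: finite_subset[of _ "Pow U"])
    have mem: "S \<in> {S'. S \<subseteq> S' \<and> S' \<subseteq> U}"
      using less.prems by simp
    have split: "card {s\<in>X. S \<subseteq> G s} = card {s\<in>X. G s = S} + (\<Sum>S'\<in>?I. card {s\<in>X. G s = S'})"
      if "\<forall>s\<in>X. G s \<subseteq> U" for G :: "'a \<Rightarrow> 'b set"
      unfolding card_supsets_eq_sum[OF assms(1,2) that, of S] sum.remove[OF fin mem] ..
    have "card {s\<in>X. G1 s = S'} = card {s\<in>X. G2 s = S'}" if "S' \<in> ?I" for S'
    proof (rule less.hyps)
      have "U - S' \<subset> U - S"
        using that by auto
      then show "card (U - S') < card (U - S)"
        using assms(2) by (intro psubset_card_mono) auto
    qed (use that in auto)
    then have "(\<Sum>S'\<in>?I. card {s\<in>X. G1 s = S'}) = (\<Sum>S'\<in>?I. card {s\<in>X. G2 s = S'})"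
      by (rule sum.cong[OF refl])
    then show ?case
      using split[OF assms(3)] split[OF assms(4)] assms(5) less.prems by simp
  qed
next
  case False
  then have "{s\<in>X. G1 s = S} = {}" "{s\<in>X. G2 s = S} = {}"
    using assms(3,4) by auto
  then show ?thesis
    by (simp only: card.empty)
qed

section \<open>The order-reversing involution of a finite set\<close>

definition rank_in :: "'a::linorder set \<Rightarrow> 'a \<Rightarrow> nat" where
  "rank_in V v = card {u \<in> V. u < v}"

definition mirror_in :: "'a::linorder set \<Rightarrow> 'a \<Rightarrow> 'a" where
  "mirror_in V v = inv_into V (rank_in V) (card V - Suc (rank_in V v))"

lemma rank_in_strict_mono:
  assumes "finite V" "v \<in> V" "v < w"
  shows "rank_in V v < rank_in V w"
  unfolding rank_in_def by (rule psubset_card_mono) (use assms in auto)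

lemma rank_in_less_card:
  assumes "finite V" "v \<in> V"
  shows "rank_in V v < card V"
  unfolding rank_in_def by (rule psubset_card_mono) (use assms in auto)

lemma rank_in_less_iff:
  "finite V \<Longrightarrow> v \<in> V \<Longrightarrow> w \<in> V \<Longrightarrow> rank_in V v < rank_in V w \<longleftrightarrow> v < w"
  by (metis rank_in_strict_mono less_asym linorder_neqE)

lemma inj_on_rank_in: "finite V \<Longrightarrow> inj_on (rank_in V) V"
  by (metis inj_onI linorder_neqE rank_in_strict_mono less_irrefl)

lemma rank_in_image:
  assumes "finite V"
  shows "rank_in V ` V = {..<card V}"
proof -
  have "rank_in V ` V \<subseteq> {..<card V}"
    using rank_in_less_card assms by auto
  moreover have "card (rank_in V ` V) = card {..<card V}"
    using card_image[OF inj_on_rank_in[OF assms]] by simp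
  ultimately show ?thesis
    by (simp add: card_subset_eq)
qed

lemma mirror_in_mem:
  assumes "finite V" "v \<in> V"
  shows "mirror_in V v \<in> V"
  unfolding mirror_in_def
  by (rule inv_into_into) (use rank_in_image[OF assms(1)] rank_in_less_card[OF assms] in auto)

lemma rank_in_mirror_in:
  assumes "finite V" "v \<in> V"
  shows "rank_in V (mirror_in V v) = card V - Suc (rank_in V v)"
  unfolding mirror_in_def
  by (rule f_inv_into_f) (use rank_in_image[OF assms(1)] rank_in_less_card[OF assms] in auto)

lemma mirror_in_mirror_in:
  assumes "finite V" "v \<in> V"
  shows "mirror_in V (mirror_in V v) = v"
proof -
  have "card V - Suc (card V - Suc (rank_in V v)) = rank_in V v"
    using rank_in_less_card[OF assms] by simp
  then have "mirror_in V (mirror_in V v) = inv_into V (rank_in V) (rank_in V v)"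
    unfolding mirror_in_def[of V "mirror_in V v"] rank_in_mirror_in[OF assms] by simp
  also have "\<dots> = v"
    by (rule inv_into_f_f[OF inj_on_rank_in[OF assms(1)] assms(2)])
  finally show ?thesis .
qed

lemma mirror_in_less_iff:
  assumes "finite V" "v \<in> V" "w \<in> V"
  shows "mirror_in V v < mirror_in V w \<longleftrightarrow> w < v"
proof -
  have "mirror_in V v < mirror_in V w \<longleftrightarrow> rank_in V (mirror_in V v) < rank_in V (mirror_in V w)"
    using rank_in_less_iff[OF assms(1) mirror_in_mem mirror_in_mem] assms by simp
  also have "\<dots> \<longleftrightarrow> rank_in V w < rank_in V v"
    using rank_in_less_card[OF assms(1,2)] rank_in_less_card[OF assms(1,3)]
    unfolding rank_in_mirror_in[OF assms(1,2)] rank_in_mirror_in[OF assms(1,3)] by arith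
  also have "\<dots> \<longleftrightarrow> w < v"
    by (rule rank_in_less_iff[OF assms(1,3,2)])
  finally show ?thesis .
qed

lemma mirror_in_image:
  assumes "finite V"
  shows "mirror_in V ` V = V"
proof
  show "mirror_in V ` V \<subseteq> V"
    using mirror_in_mem assms by auto
  show "V \<subseteq> mirror_in V ` V"
  proof
    fix v assume "v \<in> V"
    then have "v = mirror_in V (mirror_in V v)" "mirror_in V v \<in> V"
      using assms by (simp_all add: mirror_in_mirror_in mirror_in_mem)
    then show "v \<in> mirror_in V ` V" by blast
  qed
qed

lemma mirror_in_max_min:
  assumes "finite V" "v \<in> V" "w \<in> V" "\<forall>u\<in>V. u \<le> v" "\<forall>u\<in>V. w \<le> u"
  shows "mirror_in V v = w" "mirror_in V w = v"
proof -
  have "mirror_in V v \<le> u" if "u \<in> V" for u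
  proof -
    have "mirror_in V u \<le> v"
      using assms(4) mirror_in_mem[OF assms(1) that] by blast
    then have "\<not> mirror_in V (mirror_in V u) < mirror_in V v"
      using mirror_in_less_iff[OF assms(1) mirror_in_mem[OF assms(1) that] assms(2)] by simp
    then show ?thesis
      using mirror_in_mirror_in[OF assms(1) that] by simp
  qed
  then show "mirror_in V v = w"
    using assms mirror_in_mem by (meson antisym)
  then show "mirror_in V w = v"
    using mirror_in_mirror_in assms by metis
qed

section \<open>Reverse-complementing a segment\<close>

definition segment_values :: "nat \<Rightarrow> nat \<Rightarrow> 'a list \<Rightarrow> 'a set" where
  "segment_values a e s = (\<lambda>j. s ! j) ` {a..e}"

definition rc_segment :: "nat \<Rightarrow> nat \<Rightarrow> 'a::linorder list \<Rightarrow> 'a list" where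
  "rc_segment a e s = map (\<lambda>j. if a \<le> j \<and> j \<le> e
     then mirror_in (segment_values a e s) (s ! (a + e - j)) else s ! j) [0..<length s]"

lemma length_rc_segment [simp]: "length (rc_segment a e s) = length s"
  by (simp add: rc_segment_def)

lemma nth_rc_segment:
  "j < length s \<Longrightarrow> rc_segment a e s ! j =
    (if a \<le> j \<and> j \<le> e then mirror_in (segment_values a e s) (s ! (a + e - j)) else s ! j)"
  by (simp add: rc_segment_def)

lemma finite_segment_values [simp]: "finite (segment_values a e s)"
  by (simp add: segment_values_def)

lemma nth_mem_segment_values: "a \<le> j \<Longrightarrow> j \<le> e \<Longrightarrow> s ! j \<in> segment_values a e s"
  by (auto simp: segment_values_def)

lemma reflect_atLeastAtMost: "(\<lambda>j. a + e - j) ` {a..(e::nat)} = {a..e}"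
proof (rule set_eqI, rule iffI)
  fix x assume "x \<in> {a..e}"
  then have "a + e - x \<in> {a..e}" "x = a + e - (a + e - x)" by auto
  then show "x \<in> (\<lambda>j. a + e - j) ` {a..e}" by blast
qed auto

lemma segment_values_rc_segment:
  assumes "e < length s"
  shows "segment_values a e (rc_segment a e s) = segment_values a e s"
proof -
  let ?V = "segment_values a e s"
  have "segment_values a e (rc_segment a e s) = (\<lambda>j. mirror_in ?V (s ! (a + e - j))) ` {a..e}"
    unfolding segment_values_def[of a e "rc_segment a e s"]
    by (rule image_cong) (use assms in \<open>auto simp: nth_rc_segment\<close>)
  also have "\<dots> = mirror_in ?V ` (\<lambda>j. s ! j) ` (\<lambda>j. a + e - j) ` {a..e}"
    by (simp add: image_image)
  also have "\<dots> = ?V"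
    unfolding reflect_atLeastAtMost segment_values_def[symmetric] by (simp add: mirror_in_image)
  finally show ?thesis .
qed

lemma rc_segment_rc_segment:
  assumes "e < length s"
  shows "rc_segment a e (rc_segment a e s) = s"
proof (rule nth_equalityI)
  fix j assume j: "j < length (rc_segment a e (rc_segment a e s))"
  show "rc_segment a e (rc_segment a e s) ! j = s ! j"
  proof (cases "a \<le> j \<and> j \<le> e")
    case True
    then have "a + e - j < length s" "a \<le> a + e - j" "a + e - j \<le> e" "a + e - (a + e - j) = j"
      using assms by auto
    then show ?thesis
      using True j assms
      by (simp add: nth_rc_segment segment_values_rc_segment mirror_in_mirror_in nth_mem_segment_values)
  qed (use j in \<open>auto simp: nth_rc_segment\<close>)
qed simp

lemma set_subset_set_rc_segment:
  fixes a :: nat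
  assumes "e < length s"
  shows "set s \<subseteq> set (rc_segment a e s)"
proof
  let ?V = "segment_values a e s"
  fix v assume "v \<in> set s"
  then obtain j where j: "j < length s" "v = s ! j"
    by (auto simp: in_set_conv_nth)
  show "v \<in> set (rc_segment a e s)"
  proof (cases "a \<le> j \<and> j \<le> e")
    case True
    then have v: "v \<in> ?V"
      using j by (simp add: nth_mem_segment_values)
    then obtain i where i: "a \<le> i" "i \<le> e" "s ! i = mirror_in ?V v"
      using mirror_in_mem[of ?V v] by (force simp: segment_values_def)
    moreover have "a \<le> a + e - i" "a + e - i \<le> e" "a + e - (a + e - i) = i" "a + e - i < length s"
      using i assms by auto
    ultimately have "rc_segment a e s ! (a + e - i) = v"
      using v by (simp add: nth_rc_segment mirror_in_mirror_in)
    then show ?thesis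
      by (metis \<open>a + e - i < length s\<close> length_rc_segment nth_mem)
  next
    case False
    then show ?thesis
      using j by (metis length_rc_segment nth_mem nth_rc_segment)
  qed
qed

lemma is_perm_rc_segment:
  assumes "is_perm n s" "e < n"
  shows "is_perm n (rc_segment a e s)"
proof -
  have s: "length s = n" "distinct s" "set s = {1..n}"
    using assms(1) unfolding is_perm_def by auto
  have sub: "set s \<subseteq> set (rc_segment a e s)"
    by (rule set_subset_set_rc_segment) (use assms(2) s(1) in simp)
  have "n \<le> card (set (rc_segment a e s))"
    using card_mono[OF _ sub] s distinct_card by fastforce
  moreover have "card (set (rc_segment a e s)) \<le> n"
    using card_length[of "rc_segment a e s"] s(1) length_rc_segment by metis
  ultimately have card: "card (set (rc_segment a e s)) = n"
    by simp
  then have "distinct (rc_segment a e s)"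
    using s(1) by (simp add: card_distinct)
  moreover have "set (rc_segment a e s) = set s"
    using card s sub by (metis card_subset_eq distinct_card finite_set)
  ultimately show ?thesis
    using s unfolding is_perm_def by simp
qed

section \<open>Consecutive patterns\<close>

text \<open>A pattern of length \<open>m\<close> is represented by its order relation \<open>R x y \<longleftrightarrow> \<pi>\<^sub>x < \<pi>\<^sub>y\<close> on the
  positions \<open>x, y < m\<close>; positions in words are 0-based throughout.\<close>
definition occurs_at :: "nat \<Rightarrow> (nat \<Rightarrow> nat \<Rightarrow> bool) \<Rightarrow> 'a::linorder list \<Rightarrow> nat \<Rightarrow> bool" where
  "occurs_at m R s j \<longleftrightarrow> j + m \<le> length s \<and> (\<forall>x<m. \<forall>y<m. (s ! (j + x) < s ! (j + y)) = R x y)"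

definition rc_rel :: "nat \<Rightarrow> (nat \<Rightarrow> nat \<Rightarrow> bool) \<Rightarrow> nat \<Rightarrow> nat \<Rightarrow> bool" where
  "rc_rel m R x y \<longleftrightarrow> x < m \<and> y < m \<and> R (m - 1 - y) (m - 1 - x)"

definition bounded_rel :: "nat \<Rightarrow> (nat \<Rightarrow> nat \<Rightarrow> bool) \<Rightarrow> bool" where
  "bounded_rel m R \<longleftrightarrow> (\<forall>x y. R x y \<longrightarrow> x < m \<and> y < m)"

definition min_first_max_last :: "nat \<Rightarrow> (nat \<Rightarrow> nat \<Rightarrow> bool) \<Rightarrow> bool" where
  "min_first_max_last m R \<longleftrightarrow> (\<forall>x. 0 < x \<longrightarrow> x < m \<longrightarrow> R 0 x) \<and> (\<forall>x. x < m - 1 \<longrightarrow> R x (m - 1))"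

definition self_overlap :: "nat \<Rightarrow> (nat \<Rightarrow> nat \<Rightarrow> bool) \<Rightarrow> nat \<Rightarrow> bool" where
  "self_overlap m R d \<longleftrightarrow> (\<forall>x<m - d. \<forall>y<m - d. R (d + x) (d + y) = R x y)"

lemma rc_rel_rc_rel:
  assumes "bounded_rel m R"
  shows "rc_rel m (rc_rel m R) = R"
proof (intro ext)
  fix x y
  show "rc_rel m (rc_rel m R) x y = R x y"
  proof (cases "x < m \<and> y < m")
    case True
    then have "m - 1 - (m - 1 - x) = x" "m - 1 - (m - 1 - y) = y"
      by auto
    then show ?thesis
      using True unfolding rc_rel_def by auto
  qed (use assms in \<open>auto simp: rc_rel_def bounded_rel_def\<close>)
qed

lemma min_first_max_last_rc_rel: "min_first_max_last m R \<Longrightarrow> min_first_max_last m (rc_rel m R)"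
  unfolding min_first_max_last_def rc_rel_def by (auto simp: Suc_pred')

lemma self_overlap_if_occurs_twice:
  assumes "occurs_at m R s i" "occurs_at m R s j" "i < j"
  shows "self_overlap m R (j - i)"
  unfolding self_overlap_def
proof (intro allI impI)
  fix x y assume xy: "x < m - (j - i)" "y < m - (j - i)"
  have "j - i + x < m" "j - i + y < m"
    using xy by auto
  then have "(s ! (i + (j - i + x)) < s ! (i + (j - i + y))) = R (j - i + x) (j - i + y)"
    using assms(1) unfolding occurs_at_def by blast
  moreover have "i + (j - i + x) = j + x" "i + (j - i + y) = j + y"
    using assms(3) by auto
  ultimately have "(s ! (j + x) < s ! (j + y)) = R (j - i + x) (j - i + y)"
    by simp
  moreover have "(s ! (j + x) < s ! (j + y)) = R x y"
    using assms(2) xy unfolding occurs_at_def by auto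
  ultimately show "R (j - i + x) (j - i + y) = R x y"
    by simp
qed

lemma self_overlap_of_rc_rel:
  assumes "d \<le> m" "self_overlap m (rc_rel m R) d"
  shows "self_overlap m R d"
  unfolding self_overlap_def
proof (intro allI impI)
  fix x y assume xy: "x < m - d" "y < m - d"
  define x' where "x' = m - 1 - d - y"
  define y' where "y' = m - 1 - d - x"
  have "x' < m - d" "y' < m - d"
    using xy unfolding x'_def y'_def by auto
  then have "rc_rel m R (d + x') (d + y') = rc_rel m R x' y'"
    using assms(2) unfolding self_overlap_def by blast
  moreover have "rc_rel m R (d + x') (d + y') = R x y" "rc_rel m R x' y' = R (d + x) (d + y)"
    unfolding rc_rel_def using xy unfolding x'_def y'_def by (auto simp: diff_diff_left)
  ultimately show "R (d + x) (d + y) = R x y"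
    by simp
qed

lemma min_first_max_lastD:
  assumes "min_first_max_last m R"
  shows "0 < x \<Longrightarrow> x < m \<Longrightarrow> R 0 x" "x < m - 1 \<Longrightarrow> R x (m - 1)"
  using assms unfolding min_first_max_last_def by blast+

lemma occurs_at_bounds:
  assumes "occurs_at m R s j" "min_first_max_last m R" "x < m"
  shows "s ! j \<le> s ! (j + x)" "s ! (j + x) \<le> s ! (j + (m - 1))"
proof -
  have o: "(s ! (j + x) < s ! (j + y)) = R x y" if "x < m" "y < m" for x y
    using assms(1) that unfolding occurs_at_def by blast
  show "s ! j \<le> s ! (j + x)"
    using o[of 0 x] min_first_max_lastD(1)[OF assms(2), of x] assms(3) by (cases "x = 0") auto
  show "s ! (j + x) \<le> s ! (j + (m - 1))"
    using o[of x "m - 1"] min_first_max_lastD(2)[OF assms(2), of x] assms(3)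
    by (cases "x = m - 1") auto
qed

lemma occurs_at_rc_segment_inside:
  assumes "e < length s" "a \<le> j" "j + m \<le> Suc e" "occurs_at m R s (a + e + 1 - (j + m))"
  shows "occurs_at m (rc_rel m R) (rc_segment a e s) j"
proof -
  let ?V = "segment_values a e s"
  let ?i = "a + e + 1 - (j + m)"
  have mirrored: "rc_segment a e s ! (j + x) = mirror_in ?V (s ! (?i + (m - 1 - x)))"
    and mem: "s ! (?i + (m - 1 - x)) \<in> ?V" if "x < m" for x
  proof -
    have reflected: "a + e - (j + x) = ?i + (m - 1 - x)"
      using that assms(2,3) by linarith
    have "a \<le> j + x" "j + x \<le> e" "j + x < length s"
      using that assms(1-3) by linarith+
    then have "rc_segment a e s ! (j + x) = mirror_in ?V (s ! (a + e - (j + x)))"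
      by (simp add: nth_rc_segment)
    then show "rc_segment a e s ! (j + x) = mirror_in ?V (s ! (?i + (m - 1 - x)))"
      unfolding reflected .
    have "a \<le> ?i + (m - 1 - x)" "?i + (m - 1 - x) \<le> e"
      using that assms(2,3) by linarith+
    then show "s ! (?i + (m - 1 - x)) \<in> ?V"
      by (rule nth_mem_segment_values)
  qed
  have "(rc_segment a e s ! (j + x) < rc_segment a e s ! (j + y)) = rc_rel m R x y"
    if xy: "x < m" "y < m" for x y
  proof -
    have "(rc_segment a e s ! (j + x) < rc_segment a e s ! (j + y))
        = (s ! (?i + (m - 1 - y)) < s ! (?i + (m - 1 - x)))"
      unfolding mirrored[OF xy(1)] mirrored[OF xy(2)]
      by (rule mirror_in_less_iff[OF finite_segment_values mem[OF xy(1)] mem[OF xy(2)]])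
    also have "\<dots> = R (m - 1 - y) (m - 1 - x)"
    proof -
      have "m - 1 - y < m" "m - 1 - x < m"
        using xy by auto
      then show ?thesis
        using assms(4) unfolding occurs_at_def by blast
    qed
    finally show ?thesis
      using xy by (simp add: rc_rel_def)
  qed
  then show ?thesis
    using assms unfolding occurs_at_def by simp
qed

lemma rc_segment_fixes_ends:
  assumes "a \<le> e" "e < length s" "\<forall>i. a \<le> i \<longrightarrow> i \<le> e \<longrightarrow> s ! a \<le> s ! i \<and> s ! i \<le> s ! e"
  shows "rc_segment a e s ! a = s ! a" "rc_segment a e s ! e = s ! e"
proof -
  let ?V = "segment_values a e s"
  have max: "\<forall>u\<in>?V. u \<le> s ! e" and min: "\<forall>u\<in>?V. s ! a \<le> u"
    using assms(3) unfolding segment_values_def by auto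
  have "s ! e \<in> ?V" "s ! a \<in> ?V"
    using assms(1) by (auto intro!: nth_mem_segment_values)
  note mirror_in_max_min[OF finite_segment_values this max min]
  then show "rc_segment a e s ! a = s ! a" "rc_segment a e s ! e = s ! e"
    using assms(1,2) by (simp_all add: nth_rc_segment)
qed

lemma occurs_at_rc_segment_outside:
  assumes "occurs_at m R s j" "j + (m - 1) \<le> a \<or> e \<le> j"
    "rc_segment a e s ! a = s ! a" "rc_segment a e s ! e = s ! e"
  shows "occurs_at m R (rc_segment a e s) j"
proof -
  have "rc_segment a e s ! (j + x) = s ! (j + x)" if "x < m" for x
  proof -
    have "j + x < length s"
      using assms(1) that unfolding occurs_at_def by simp
    moreover have "j + x < a \<or> e < j + x \<or> j + x = a \<or> j + x = e"
      using assms(2) that by linarith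
    ultimately show ?thesis
      using assms(3,4) by (auto simp: nth_rc_segment)
  qed
  then show ?thesis
    using assms(1) unfolding occurs_at_def by simp
qed

section \<open>Chains of overlapping occurrences\<close>

definition chain :: "nat \<Rightarrow> nat \<Rightarrow> nat \<Rightarrow> nat set" where
  "chain a k r = (\<lambda>i. a + i * k) ` {..<r}"

lemma mem_chain_iff: "j \<in> chain a k r \<longleftrightarrow> (\<exists>i<r. j = a + i * k)"
  by (auto simp: chain_def)

lemma chain_memI: "i < r \<Longrightarrow> a + i * k \<in> chain a k r"
  by (auto simp: chain_def)

text \<open>Two occurrences at positions of a \<open>spaced\<close> set either overlap in \<open>m - k\<close> entries or
  share at most one entry.\<close>
definition spaced :: "nat \<Rightarrow> nat \<Rightarrow> nat set \<Rightarrow> bool" where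
  "spaced m k T \<longleftrightarrow> (\<forall>i\<in>T. \<forall>j\<in>T. i < j \<longrightarrow> j - i = k \<or> m - 1 \<le> j - i)"

definition occurs_on :: "nat \<Rightarrow> nat set \<Rightarrow> (nat \<Rightarrow> nat \<Rightarrow> nat \<Rightarrow> bool) \<Rightarrow> 'a::linorder list \<Rightarrow> bool" where
  "occurs_on m T P s \<longleftrightarrow> (\<forall>j\<in>T. occurs_at m (P j) s j)"

lemma div_mult_bounds:
  assumes "0 < (k::nat)"
  shows "n div k * k \<le> n" "n < n div k * k + k"
  using div_mult_mod_eq[of n k] mod_less_divisor[OF assms, of n] by linarith+

lemma chain_window_cover:
  fixes a k m p r :: nat
  assumes "0 < k" "k < m" "1 \<le> r" "a \<le> p" "p \<le> a + (r - 1) * k + (m - 1)"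
  shows "\<exists>i<r. \<exists>x<m. p = a + i * k + x"
proof -
  define q where "q = (p - a) div k"
  note q = div_mult_bounds[OF assms(1), of "p - a", folded q_def]
  show ?thesis
  proof (cases "q < r")
    case True
    moreover have "p - a - q * k < m" "p = a + q * k + (p - a - q * k)"
      using q assms(2,4) by linarith+
    ultimately show ?thesis
      by blast
  next
    case False
    then have "(r - 1) * k \<le> q * k"
      by (intro mult_le_mono1) simp
    then have "a + (r - 1) * k \<le> p"
      using q(1) assms(4) by linarith
    then have "p - (a + (r - 1) * k) < m" "p = a + (r - 1) * k + (p - (a + (r - 1) * k))"
      using assms(1,2,5) by linarith+
    moreover have "r - 1 < r"
      using assms(3) by simp
    ultimately show ?thesis
      by blast
  qed
qed

lemma chain_starts_mono:
  assumes "k < m" "min_first_max_last m Q" "\<forall>i<r. occurs_at m Q s (a + i * k)" "i < r"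
  shows "s ! a \<le> s ! (a + i * k)"
  using assms(4)
proof (induction i)
  case (Suc i)
  have "occurs_at m Q s (a + i * k)"
    using assms(3) Suc.prems by simp
  then have "s ! (a + i * k) \<le> s ! (a + i * k + k)"
    by (rule occurs_at_bounds(1)[OF _ assms(2,1)])
  moreover have "a + i * k + k = a + Suc i * k"
    by simp
  ultimately show ?case
    using order_trans[OF Suc.IH] Suc.prems by simp
qed simp

lemma chain_ends_mono:
  assumes "k < m" "min_first_max_last m Q" "\<forall>i<r. occurs_at m Q s (a + i * k)" "i < r"
  shows "s ! (a + i * k + (m - 1)) \<le> s ! (a + (r - 1) * k + (m - 1))"
  using assms(4)
proof (induction "r - 1 - i" arbitrary: i)
  case 0
  then have "i = r - 1"
    by linarith
  then show ?case
    by simp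
next
  case (Suc d)
  then have i: "Suc i < r" "d = r - 1 - Suc i"
    by linarith+
  have "occurs_at m Q s (a + Suc i * k)"
    using assms(3) i(1) by blast
  then have step: "s ! (a + Suc i * k + (m - 1 - k)) \<le> s ! (a + Suc i * k + (m - 1))"
    by (rule occurs_at_bounds(2)[OF _ assms(2)]) (use assms(1) in simp)
  have shift: "a + Suc i * k + (m - 1 - k) = a + i * k + (m - 1)"
    using assms(1) by simp
  have "s ! (a + i * k + (m - 1)) \<le> s ! (a + Suc i * k + (m - 1))"
    using step unfolding shift .
  then show ?case
    using Suc.hyps(1)[OF i(2,1)] by (rule order_trans)
qed

lemma chain_segment_min_max:
  assumes "0 < k" "k < m" "1 \<le> r" "min_first_max_last m Q" "\<forall>i<r. occurs_at m Q s (a + i * k)"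
    "a \<le> p" "p \<le> a + (r - 1) * k + (m - 1)"
  shows "s ! a \<le> s ! p \<and> s ! p \<le> s ! (a + (r - 1) * k + (m - 1))"
proof -
  obtain i x where ix: "i < r" "x < m" "p = a + i * k + x"
    using chain_window_cover[OF assms(1-3,6,7)] by blast
  have "occurs_at m Q s (a + i * k)"
    using assms(5) ix(1) by blast
  then have "s ! (a + i * k) \<le> s ! p" "s ! p \<le> s ! (a + i * k + (m - 1))"
    unfolding ix(3) by (rule occurs_at_bounds[OF _ assms(4) ix(2)])+
  then show ?thesis
    using order_trans[OF chain_starts_mono[OF assms(2,4,5) ix(1)]]
      order_trans[OF _ chain_ends_mono[OF assms(2,4,5) ix(1)]]
    by simp
qed

lemma spacedD:
  "spaced m k T \<Longrightarrow> x \<in> T \<Longrightarrow> y \<in> T \<Longrightarrow> x < y \<Longrightarrow> y - x = k \<or> m - 1 \<le> y - x"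
  unfolding spaced_def by blast

lemma spaced_not_inside_chain:
  assumes "0 < k" "k + 2 \<le> m" "spaced m k T" "chain a k r \<subseteq> T" "j \<in> T" "j \<notin> chain a k r"
    "a < j" "j < a + r * k"
  shows False
proof -
  define q where "q = (j - a) div k"
  note q = div_mult_bounds[OF assms(1), of "j - a", folded q_def]
  have "q * k < r * k"
    using q(1) assms(7,8) by linarith
  then have "a + q * k \<in> chain a k r"
    by (intro chain_memI) simp
  then have "a + q * k \<in> T" "a + q * k \<noteq> j"
    using assms(4,6) by auto
  moreover have "a + q * k < j" "j - (a + q * k) < k"
    using q assms(7) \<open>a + q * k \<noteq> j\<close> by linarith+
  ultimately show False
    using spacedD[OF assms(3) _ assms(5)] assms(2) by fastforce
qed

lemma spaced_chain_apart:
  assumes "0 < k" "k + 2 \<le> m" "spaced m k T" "1 \<le> r" "chain a k r \<subseteq> T" "a + r * k \<notin> T"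
    "\<forall>t\<in>T. t + k \<noteq> a" "j \<in> T" "j \<notin> chain a k r"
  shows "j + (m - 1) \<le> a \<or> a + (r - 1) * k + (m - 1) \<le> j"
proof -
  have "a \<in> chain a k r" "a + (r - 1) * k \<in> chain a k r"
    using chain_memI[of 0 r a k] chain_memI[of "r - 1" r a k] assms(4) by simp_all
  then have a: "a \<in> T" "j \<noteq> a" and c: "a + (r - 1) * k \<in> T"
    using assms(5,9) by auto
  consider "j < a" | "a < j" "j < a + r * k" | "a + r * k \<le> j"
    using \<open>j \<noteq> a\<close> by linarith
  then show ?thesis
  proof cases
    case 1
    then have "a - j \<noteq> k"
      using assms(7,8) by fastforce
    with spacedD[OF assms(3,8) a(1) 1] 1 show ?thesis
      by linarith
  next
    case 2
    then show ?thesis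
      using spaced_not_inside_chain[OF assms(1-3,5,8,9)] by blast
  next
    case 3
    have next_c: "a + (r - 1) * k + k = a + r * k"
      using assms(4) by (cases r) auto
    have "a + (r - 1) * k < j"
      using 3 next_c assms(1) by linarith
    moreover have "j \<noteq> a + (r - 1) * k + k"
      unfolding next_c using assms(6,8) by blast
    ultimately show ?thesis
      using spacedD[OF assms(3) c assms(8)] by auto
  qed
qed

lemma chain_end_less_length:
  assumes "0 < m" "1 \<le> r" "chain a k r \<subseteq> T" "occurs_on m T P s"
  shows "a + (r - 1) * k + (m - 1) < length s"
proof -
  have "a + (r - 1) * k \<in> T"
    using assms(3) chain_memI[of "r - 1" r] assms(2) by auto
  then have "a + (r - 1) * k + m \<le> length s"
    using assms(4) unfolding occurs_on_def occurs_at_def by blast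
  then show ?thesis
    using assms(1) by linarith
qed

lemma occurs_at_rc_segment_chain:
  assumes "0 < m" "a + (r - 1) * k + (m - 1) < length s" "\<forall>i<r. occurs_at m Q s (a + i * k)" "i < r"
  shows "occurs_at m (rc_rel m Q) (rc_segment a (a + (r - 1) * k + (m - 1)) s) (a + i * k)"
proof -
  define e where "e = a + (r - 1) * k + (m - 1)"
  have split: "(r - 1) * k = (r - 1 - i) * k + i * k"
    using assms(4) by (simp add: add_mult_distrib[symmetric])
  have "a + e + 1 - (a + i * k + m) = a + (r - 1 - i) * k" "a + i * k + m \<le> Suc e"
    unfolding e_def using split assms(1) by linarith+
  moreover have "occurs_at m Q s (a + (r - 1 - i) * k)"
    using assms(3,4) by (simp add: less_imp_diff_less)
  ultimately show ?thesis
    using occurs_at_rc_segment_inside[OF assms(2)[folded e_def]] unfolding e_def by simp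
qed

lemma occurs_on_rc_segment:
  assumes "0 < k" "k + 2 \<le> m" "spaced m k T" "1 \<le> r" "chain a k r \<subseteq> T" "a + r * k \<notin> T"
    "\<forall>t\<in>T. t + k \<noteq> a" "\<forall>j\<in>chain a k r. P j = Q" "min_first_max_last m Q" "occurs_on m T P s"
  shows "occurs_on m T (\<lambda>j. if j \<in> chain a k r then rc_rel m Q else P j)
           (rc_segment a (a + (r - 1) * k + (m - 1)) s)"
proof -
  define e where "e = a + (r - 1) * k + (m - 1)"
  have occ: "occurs_at m (P j) s j" if "j \<in> T" for j
    using assms(10) that unfolding occurs_on_def by blast
  have chain_occ: "\<forall>i<r. occurs_at m Q s (a + i * k)"
    using occ assms(5,8) chain_memI by (metis subsetD)
  have e_len: "e < length s"
    unfolding e_def using chain_end_less_length[OF _ assms(4,5,10)] assms(2) by simp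
  have "a \<le> e"
    unfolding e_def by simp
  moreover have "\<forall>i. a \<le> i \<longrightarrow> i \<le> e \<longrightarrow> s ! a \<le> s ! i \<and> s ! i \<le> s ! e"
    unfolding e_def using chain_segment_min_max[OF assms(1) _ assms(4,9) chain_occ] assms(2) by simp
  ultimately have ends: "rc_segment a e s ! a = s ! a" "rc_segment a e s ! e = s ! e"
    using rc_segment_fixes_ends e_len by blast+
  show ?thesis
    unfolding occurs_on_def e_def[symmetric]
  proof
    fix j assume j: "j \<in> T"
    show "occurs_at m (if j \<in> chain a k r then rc_rel m Q else P j) (rc_segment a e s) j"
    proof (cases "j \<in> chain a k r")
      case True
      then obtain i where "i < r" "j = a + i * k"
        by (auto simp: mem_chain_iff)
      then show ?thesis
        using occurs_at_rc_segment_chain[OF _ e_len[unfolded e_def] chain_occ] True assms(2)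
        unfolding e_def by simp
    next
      case False
      then show ?thesis
        using occurs_at_rc_segment_outside[OF occ[OF j] _ ends]
          spaced_chain_apart[OF assms(1-7) j False]
        unfolding e_def by simp
    qed
  qed
qed

text \<open>The flip of the segment spanned by the chain is an involution exchanging the two sets.\<close>
lemma card_perms_occurs_on_rc_chain:
  assumes "0 < k" "k + 2 \<le> m" "spaced m k T" "1 \<le> r" "chain a k r \<subseteq> T" "a + r * k \<notin> T"
    "\<forall>t\<in>T. t + k \<noteq> a" "\<forall>j\<in>chain a k r. P j = Q" "min_first_max_last m Q" "bounded_rel m Q"
  shows "card {s. is_perm n s \<and> occurs_on m T P s} =
    card {s. is_perm n s \<and> occurs_on m T (\<lambda>j. if j \<in> chain a k r then rc_rel m Q else P j) s}"
    (is "card ?A = card {s. is_perm n s \<and> occurs_on m T ?P' s}")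
proof -
  let ?B = "{s. is_perm n s \<and> occurs_on m T ?P' s}"
  let ?flip = "rc_segment a (a + (r - 1) * k + (m - 1))"
  have P'_on_chain: "\<forall>j\<in>chain a k r. ?P' j = rc_rel m Q"
    by simp
  have P'_back: "(\<lambda>j. if j \<in> chain a k r then rc_rel m (rc_rel m Q) else ?P' j) = P"
    using assms(8) rc_rel_rc_rel[OF assms(10)] by auto
  have end_less: "a + (r - 1) * k + (m - 1) < n"
    if "is_perm n s" "occurs_on m T P'' s" for s P''
    using chain_end_less_length[OF _ assms(4,5) that(2)] assms(2) that(1)
    unfolding is_perm_def by simp
  have "?flip ` ?A \<subseteq> ?B"
    using occurs_on_rc_segment[OF assms(1-9)] is_perm_rc_segment end_less by auto
  moreover have "?flip ` ?B \<subseteq> ?A"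
    using occurs_on_rc_segment[OF assms(1-7) P'_on_chain min_first_max_last_rc_rel[OF assms(9)]]
      is_perm_rc_segment end_less
    unfolding P'_back by auto
  moreover have "?flip (?flip s) = s" if "is_perm n s" "occurs_on m T P'' s" for s P''
    by (rule rc_segment_rc_segment) (use end_less[OF that] that(1) in \<open>simp add: is_perm_def\<close>)
  ultimately show ?thesis
    by (intro card_eq_by_involution) auto
qed

definition rc_on :: "nat \<Rightarrow> (nat \<Rightarrow> nat \<Rightarrow> bool) \<Rightarrow> nat set \<Rightarrow> nat \<Rightarrow> nat \<Rightarrow> nat \<Rightarrow> bool" where
  "rc_on m R F j = (if j \<in> F then rc_rel m R else R)"

text \<open>\<open>F\<close> is a union of maximal \<open>k\<close>-chains of \<open>T\<close>.\<close>
definition shift_closed :: "nat \<Rightarrow> nat set \<Rightarrow> nat set \<Rightarrow> bool" where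
  "shift_closed k T F \<longleftrightarrow> (\<forall>j\<in>F. j + k \<in> T \<longrightarrow> j + k \<in> F) \<and> (\<forall>j\<in>T. j + k \<in> F \<longrightarrow> j \<in> F)"

lemma maximal_chain_exists:
  assumes "finite T" "0 < k" "a \<in> T"
  obtains r where "1 \<le> r" "chain a k r \<subseteq> T" "a + r * k \<notin> T"
proof -
  have "\<exists>r. a + r * k \<notin> T"
  proof
    have "Suc (Max T) * 1 \<le> Suc (Max T) * k"
      using assms(2) by (intro mult_le_mono2) simp
    then have "Max T < a + Suc (Max T) * k"
      by simp
    then show "a + Suc (Max T) * k \<notin> T"
      using Max_ge[OF assms(1)] by fastforce
  qed
  then have "a + (LEAST r. a + r * k \<notin> T) * k \<notin> T"
    by (rule LeastI_ex)
  moreover have "chain a k (LEAST r. a + r * k \<notin> T) \<subseteq> T"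
    using not_less_Least by (auto simp: chain_def)
  moreover have "1 \<le> (LEAST r. a + r * k \<notin> T)"
    using calculation(1) assms(3) by (cases "LEAST r. a + r * k \<notin> T") auto
  ultimately show ?thesis
    using that by blast
qed

lemma chain_disjoint_shift_closed:
  assumes "shift_closed k T F" "chain a k r \<subseteq> T" "a \<notin> F"
  shows "chain a k r \<inter> F = {}"
proof -
  have "a + i * k \<notin> F" if "i < r" for i
    using that
  proof (induction i)
    case (Suc i)
    then have "a + i * k \<in> T" "a + i * k \<notin> F"
      using assms(2) chain_memI[of i r a k] by auto
    moreover have "a + Suc i * k = a + i * k + k"
      by simp
    ultimately show ?case
      using assms(1) unfolding shift_closed_def by metis
  qed (use assms(3) in simp)
  then show ?thesis
    by (auto simp: mem_chain_iff)
qed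

lemma shift_closed_Un_chain:
  assumes "shift_closed k T F" "chain a k r \<subseteq> T" "a + r * k \<notin> T" "\<forall>t\<in>T. t + k \<noteq> a"
  shows "shift_closed k T (F \<union> chain a k r)"
  unfolding shift_closed_def
proof (intro conjI ballI impI)
  fix j assume j: "j \<in> F \<union> chain a k r" "j + k \<in> T"
  show "j + k \<in> F \<union> chain a k r"
  proof (cases "j \<in> F")
    case False
    then obtain i where i: "i < r" "j = a + i * k"
      using j(1) by (auto simp: mem_chain_iff)
    then have "Suc i < r"
      using j(2) assms(3) by (metis Suc_lessI add.assoc mult_Suc add.commute)
    then have "a + Suc i * k \<in> chain a k r"
      by (rule chain_memI)
    moreover have "j + k = a + Suc i * k"
      using i(2) by simp
    ultimately show ?thesis
      by (metis UnI2)
  next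
    case True
    then show ?thesis
      using assms(1) j(2) unfolding shift_closed_def by blast
  qed
next
  fix j assume j: "j \<in> T" "j + k \<in> F \<union> chain a k r"
  show "j \<in> F \<union> chain a k r"
  proof (cases "j + k \<in> F")
    case False
    then obtain i where i: "i < r" "j + k = a + i * k"
      using j(2) by (auto simp: mem_chain_iff)
    then obtain i' where "i = Suc i'"
      using assms(4) j(1) by (cases i) auto
    then have "j = a + i' * k" "i' < r"
      using i by auto
    then show ?thesis
      using chain_memI by blast
  next
    case True
    then show ?thesis
      using assms(1) j(1) unfolding shift_closed_def by blast
  qed
qed

lemma shift_closed_no_predecessor:
  assumes "shift_closed k T F" "0 < k" "a \<in> T - F" "\<forall>t\<in>T - F. a \<le> t"
  shows "\<forall>t\<in>T. t + k \<noteq> a"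
proof (intro ballI notI)
  fix t assume t: "t \<in> T" "t + k = a"
  then have "t \<notin> F"
    using assms(1,3) unfolding shift_closed_def by auto
  then have "a \<le> t"
    using assms(4) t(1) by blast
  then show False
    using assms(2) t(2) by linarith
qed

lemma card_perms_occurs_on_rc_on:
  assumes "0 < k" "k + 2 \<le> m" "spaced m k T" "finite T" "min_first_max_last m R" "bounded_rel m R"
    "F \<subseteq> T" "shift_closed k T F"
  shows "card {s. is_perm n s \<and> occurs_on m T (rc_on m R F) s} =
    card {s. is_perm n s \<and> occurs_on m T (rc_on m R T) s}"
  using assms(7,8)
proof (induction "card (T - F)" arbitrary: F rule: less_induct)
  case less
  show ?case
  proof (cases "F = T")
    case False
    define a where "a = Min (T - F)"
    have "T - F \<noteq> {}"
      using less.prems(1) False by auto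
    then have "a \<in> T - F"
      unfolding a_def using assms(4) by (intro Min_in) auto
    moreover have "\<forall>t\<in>T - F. a \<le> t"
      unfolding a_def using assms(4) by (intro ballI Min_le) auto
    ultimately have a: "a \<in> T" "a \<notin> F" and no_pred: "\<forall>t\<in>T. t + k \<noteq> a"
      using shift_closed_no_predecessor[OF less.prems(2) assms(1)] by auto
    obtain r where r: "1 \<le> r" "chain a k r \<subseteq> T" "a + r * k \<notin> T"
      using maximal_chain_exists[OF assms(4,1) a(1)] by blast
    let ?C = "chain a k r"
    have "\<forall>j\<in>?C. rc_on m R F j = R"
      using chain_disjoint_shift_closed[OF less.prems(2) r(2) a(2)] by (auto simp: rc_on_def)
    moreover have "(\<lambda>j. if j \<in> ?C then rc_rel m R else rc_on m R F j) = rc_on m R (F \<union> ?C)"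
      by (auto simp: rc_on_def fun_eq_iff)
    ultimately have "card {s. is_perm n s \<and> occurs_on m T (rc_on m R F) s} =
        card {s. is_perm n s \<and> occurs_on m T (rc_on m R (F \<union> ?C)) s}"
      using card_perms_occurs_on_rc_chain[OF assms(1-3) r no_pred _ assms(5,6)] by simp
    also have "\<dots> = card {s. is_perm n s \<and> occurs_on m T (rc_on m R T) s}"
    proof (rule less.hyps)
      have "a \<in> ?C"
        using chain_memI[of 0 r a k] r(1) by simp
      then have "T - (F \<union> ?C) \<subset> T - F"
        using a by auto
      then show "card (T - (F \<union> ?C)) < card (T - F)"
        using assms(4) by (intro psubset_card_mono) auto
      show "F \<union> ?C \<subseteq> T"
        using less.prems(1) r(2) by simp
      show "shift_closed k T (F \<union> ?C)"
        by (rule shift_closed_Un_chain[OF less.prems(2) r(2,3) no_pred])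
    qed
    finally show ?thesis .
  qed simp
qed

definition occurrences :: "nat \<Rightarrow> (nat \<Rightarrow> nat \<Rightarrow> bool) \<Rightarrow> 'a::linorder list \<Rightarrow> nat set" where
  "occurrences m R s = {j. occurs_at m R s j}"

lemma spaced_if_subset_occurrences:
  assumes "\<forall>d. 1 \<le> d \<longrightarrow> d + 2 \<le> m \<longrightarrow> self_overlap m R d \<longrightarrow> d = k" "T \<subseteq> occurrences m R s"
  shows "spaced m k T"
  unfolding spaced_def
proof (intro ballI impI)
  fix i j assume ij: "i \<in> T" "j \<in> T" "i < j"
  then have "self_overlap m R (j - i)"
    using self_overlap_if_occurs_twice assms(2) unfolding occurrences_def by blast
  then show "j - i = k \<or> m - 1 \<le> j - i"
    using assms(1) ij(3) by (cases "j - i + 2 \<le> m") auto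
qed

lemma unique_self_overlap_rc_rel:
  assumes "\<forall>d. 1 \<le> d \<longrightarrow> d + 2 \<le> m \<longrightarrow> self_overlap m R d \<longrightarrow> d = k"
  shows "\<forall>d. 1 \<le> d \<longrightarrow> d + 2 \<le> m \<longrightarrow> self_overlap m (rc_rel m R) d \<longrightarrow> d = k"
  using assms self_overlap_of_rc_rel by simp

lemma card_perms_supset_occurrences_rc_rel:
  assumes "0 < k" "k + 2 \<le> m" "min_first_max_last m R" "bounded_rel m R"
    "\<forall>d. 1 \<le> d \<longrightarrow> d + 2 \<le> m \<longrightarrow> self_overlap m R d \<longrightarrow> d = k" "finite T"
  shows "card {s. is_perm n s \<and> T \<subseteq> occurrences m R s} =
    card {s. is_perm n s \<and> T \<subseteq> occurrences m (rc_rel m R) s}"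
proof (cases "spaced m k T")
  case True
  have "T \<subseteq> occurrences m R s \<longleftrightarrow> occurs_on m T (rc_on m R {}) s"
    and "T \<subseteq> occurrences m (rc_rel m R) s \<longleftrightarrow> occurs_on m T (rc_on m R T) s" for s :: "nat list"
    unfolding occurs_on_def rc_on_def occurrences_def by auto
  moreover have "shift_closed k T {}"
    by (simp add: shift_closed_def)
  ultimately show ?thesis
    using card_perms_occurs_on_rc_on[OF assms(1,2) True assms(6,3,4)] by simp
next
  case False
  then have "\<not> T \<subseteq> occurrences m R s" "\<not> T \<subseteq> occurrences m (rc_rel m R) s" for s :: "nat list"
    using spaced_if_subset_occurrences[OF assms(5)]
      spaced_if_subset_occurrences[OF unique_self_overlap_rc_rel[OF assms(5)]] by blast+
  then show ?thesis
    by simp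
qed

lemma finite_perms: "finite {s. is_perm n s}"
  by (rule finite_subset[OF _ finite_lists_length_eq[of "{1..n}" n]]) (auto simp: is_perm_def)

lemma card_perms_occurrences_rc_rel:
  assumes "0 < k" "k + 2 \<le> m" "min_first_max_last m R" "bounded_rel m R"
    "\<forall>d. 1 \<le> d \<longrightarrow> d + 2 \<le> m \<longrightarrow> self_overlap m R d \<longrightarrow> d = k"
  shows "card {s. is_perm n s \<and> occurrences m R s = U} =
    card {s. is_perm n s \<and> occurrences m (rc_rel m R) s = U}"
proof -
  have bounded: "occurrences m Q s \<subseteq> {..n}" if "is_perm n s" for Q s
  proof -
    have "length s = n"
      using that by (simp add: is_perm_def)
    then show ?thesis
      by (auto simp: occurrences_def occurs_at_def)
  qed
  have "card {s\<in>{s. is_perm n s}. occurrences m R s = U} =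
      card {s\<in>{s. is_perm n s}. occurrences m (rc_rel m R) s = U}"
  proof (rule card_fibres_eq_if_card_supsets_eq[OF finite_perms finite_atMost])
    show "\<forall>T\<subseteq>{..n}. card {s \<in> {s. is_perm n s}. T \<subseteq> occurrences m R s} =
        card {s \<in> {s. is_perm n s}. T \<subseteq> occurrences m (rc_rel m R) s}"
    proof (intro allI impI)
      fix T :: "nat set" assume "T \<subseteq> {..n}"
      then have "finite T"
        by (rule finite_subset) simp
      then show "card {s \<in> {s. is_perm n s}. T \<subseteq> occurrences m R s} =
          card {s \<in> {s. is_perm n s}. T \<subseteq> occurrences m (rc_rel m R) s}"
        using card_perms_supset_occurrences_rc_rel[OF assms] by simp
    qed
  qed (use bounded in blast)+
  then show ?thesis
    by simp
qed

lemma nth_st: "x < length w \<Longrightarrow> st w ! x = card {y \<in> set w. y < w ! x} + 1"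
  by (simp add: st_def)

lemma nth_st_less_iff:
  assumes "x < length w" "y < length w"
  shows "st w ! x < st w ! y \<longleftrightarrow> w ! x < w ! y"
proof (cases "w ! x < w ! y")
  case True
  then have "{z \<in> set w. z < w ! x} \<subset> {z \<in> set w. z < w ! y}"
    using assms nth_mem by fastforce
  then have "card {z \<in> set w. z < w ! x} < card {z \<in> set w. z < w ! y}"
    by (intro psubset_card_mono) auto
  then show ?thesis
    using True assms by (simp add: nth_st)
next
  case False
  then have "card {z \<in> set w. z < w ! y} \<le> card {z \<in> set w. z < w ! x}"
    by (intro card_mono) auto
  then show ?thesis
    using False assms by (simp add: nth_st)
qed

lemma card_less_nth_distinct:
  assumes "distinct w"
  shows "card {y \<in> set w. y < v} = card {i. i < length w \<and> w ! i < v}"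
proof -
  have "{y \<in> set w. y < v} = (\<lambda>i. w ! i) ` {i. i < length w \<and> w ! i < v}"
    by (auto simp: in_set_conv_nth)
  moreover have "inj_on (\<lambda>i. w ! i) {i. i < length w \<and> w ! i < v}"
    using assms by (intro inj_on_nth) auto
  ultimately show ?thesis
    by (simp add: card_image)
qed

lemma st_eq_st_iff:
  assumes "distinct w1" "distinct w2" "length w1 = length w2"
  shows "st w1 = st w2 \<longleftrightarrow> (\<forall>x<length w1. \<forall>y<length w1. (w1 ! x < w1 ! y) = (w2 ! x < w2 ! y))"
proof
  assume "st w1 = st w2"
  then show "\<forall>x<length w1. \<forall>y<length w1. (w1 ! x < w1 ! y) = (w2 ! x < w2 ! y)"
    using nth_st_less_iff assms(3) by metis
next
  assume same_order: "\<forall>x<length w1. \<forall>y<length w1. (w1 ! x < w1 ! y) = (w2 ! x < w2 ! y)"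
  show "st w1 = st w2"
  proof (rule nth_equalityI)
    show "length (st w1) = length (st w2)"
      using assms(3) by (simp add: st_def)
    fix x assume "x < length (st w1)"
    then have x: "x < length w1"
      by (simp add: st_def)
    then have "{i. i < length w1 \<and> w1 ! i < w1 ! x} = {i. i < length w2 \<and> w2 ! i < w2 ! x}"
      using same_order assms(3) by auto
    then show "st w1 ! x = st w2 ! x"
      using x assms by (simp add: nth_st card_less_nth_distinct)
  qed
qed

lemma st_is_perm:
  assumes "is_perm m q"
  shows "st q = q"
proof (rule nth_equalityI)
  fix x assume "x < length (st q)"
  then have x: "x < length q"
    by (simp add: st_def)
  then have "q ! x \<in> {1..m}"
    using assms nth_mem unfolding is_perm_def by blast
  moreover have "{y \<in> set q. y < q ! x} = {1..<q ! x}"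
    using assms calculation unfolding is_perm_def by auto
  ultimately show "st q ! x = q ! x"
    using x by (simp add: nth_st)
qed (simp add: st_def)

definition pattern_rel :: "nat \<Rightarrow> nat list \<Rightarrow> nat \<Rightarrow> nat \<Rightarrow> bool" where
  "pattern_rel m q x y \<longleftrightarrow> x < m \<and> y < m \<and> q ! x < q ! y"

lemma bounded_rel_pattern_rel: "bounded_rel m (pattern_rel m q)"
  by (simp add: bounded_rel_def pattern_rel_def)

lemma Em_eq_Suc_occurrences:
  assumes "is_perm m q" "is_perm n s"
  shows "Em q s = Suc ` occurrences m (pattern_rel m q) s"
proof -
  have q: "length q = m" "distinct q" and s: "length s = n" "distinct s"
    using assms unfolding is_perm_def by auto
  have "i \<in> Em q s \<longleftrightarrow> 1 \<le> i \<and> occurs_at m (pattern_rel m q) s (i - 1)" for i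
  proof (cases "1 \<le> i \<and> i + m \<le> n + 1")
    case True
    let ?w = "take m (drop (i - 1) s)"
    have w: "length ?w = m" "distinct ?w" "\<And>x. x < m \<Longrightarrow> ?w ! x = s ! (i - 1 + x)"
      using True s by auto
    have "st ?w = q \<longleftrightarrow> st ?w = st q"
      using st_is_perm[OF assms(1)] by simp
    also have "\<dots> \<longleftrightarrow> (\<forall>x<m. \<forall>y<m. (?w ! x < ?w ! y) = (q ! x < q ! y))"
      using st_eq_st_iff[OF w(2) q(2)] w(1) q(1) by simp
    also have "\<dots> \<longleftrightarrow> occurs_at m (pattern_rel m q) s (i - 1)"
      unfolding occurs_at_def pattern_rel_def using w(3) True s by auto
    finally show ?thesis
      unfolding Em_def using True q s by auto
  next
    case False
    then show ?thesis
      unfolding Em_def occurs_at_def using q s by auto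
  qed
  note Em_iff = this
  show ?thesis
  proof (rule set_eqI)
    fix i
    show "i \<in> Em q s \<longleftrightarrow> i \<in> Suc ` occurrences m (pattern_rel m q) s"
      using Em_iff[of i] unfolding occurrences_def by (cases i) auto
  qed
qed

lemma overlap_set_eq_self_overlap:
  assumes "is_perm m p"
  shows "overlap_set p = {d. 1 \<le> d \<and> d \<le> m - 1 \<and> self_overlap m (pattern_rel m p) d}"
proof -
  have p: "length p = m" "distinct p"
    using assms unfolding is_perm_def by auto
  have "st (drop d p) = st (take (m - d) p) \<longleftrightarrow> self_overlap m (pattern_rel m p) d" for d
  proof -
    have "st (drop d p) = st (take (m - d) p) \<longleftrightarrow>
        (\<forall>x<m - d. \<forall>y<m - d. (p ! (d + x) < p ! (d + y)) = (p ! x < p ! y))"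
      using st_eq_st_iff[of "drop d p" "take (m - d) p"] p by simp
    also have "\<dots> \<longleftrightarrow> self_overlap m (pattern_rel m p) d"
    proof -
      have "d + x < m" "x < m" if "x < m - d" for x
        using that by auto
      then show ?thesis
        unfolding self_overlap_def pattern_rel_def by simp
    qed
    finally show ?thesis .
  qed
  then show ?thesis
    unfolding overlap_set_def p(1) by auto
qed

lemma min_first_max_last_pattern_rel:
  assumes "is_perm m p" "p ! 0 = 1" "p ! (m - 1) = m"
  shows "min_first_max_last m (pattern_rel m p)"
proof -
  have p: "length p = m" "distinct p" "set p = {1..m}"
    using assms(1) unfolding is_perm_def by auto
  have range: "1 \<le> p ! x" "p ! x \<le> m" if "x < m" for x
    using p nth_mem[of x p] that by auto
  have "p ! 0 < p ! x" if "0 < x" "x < m" for x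
    using range[OF that(2)] nth_eq_iff_index_eq[OF p(2), of 0 x] that p(1) assms(2) by fastforce
  moreover have "p ! x < p ! (m - 1)" if "x < m - 1" for x
    using range[of x] nth_eq_iff_index_eq[OF p(2), of x "m - 1"] that p(1) assms(3) by fastforce
  ultimately show ?thesis
    unfolding min_first_max_last_def pattern_rel_def by auto
qed

lemma unique_nontrivial_self_overlap:
  assumes "is_perm m p" "card (overlap_set p) = 2"
  obtains k where "0 < k" "k + 2 \<le> m"
    "\<forall>d. 1 \<le> d \<longrightarrow> d + 2 \<le> m \<longrightarrow> self_overlap m (pattern_rel m p) d \<longrightarrow> d = k"
proof -
  let ?O = "overlap_set p"
  note O_eq = overlap_set_eq_self_overlap[OF assms(1)]
  obtain x y where xy: "?O = {x, y}" "x \<noteq> y"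
    using assms(2) card_2_iff[of ?O] by blast
  have "x \<in> ?O"
    using xy(1) by simp
  then have "1 \<le> x" "x \<le> m - 1"
    unfolding O_eq by simp_all
  then have "2 \<le> m"
    by linarith
  then have top: "m - 1 \<in> ?O"
    unfolding O_eq by (simp add: self_overlap_def pattern_rel_def)
  define k where "k = (if x = m - 1 then y else x)"
  have k: "k \<in> ?O" "k \<noteq> m - 1"
    using xy top unfolding k_def by auto
  have unique: "d = k" if "d \<in> ?O" "d \<noteq> m - 1" for d
    using xy that top unfolding k_def by auto
  show ?thesis
  proof (rule that)
    show "0 < k" "k + 2 \<le> m"
      using k unfolding O_eq by auto
    show "\<forall>d. 1 \<le> d \<longrightarrow> d + 2 \<le> m \<longrightarrow> self_overlap m (pattern_rel m p) d \<longrightarrow> d = k"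
      using unique unfolding O_eq by auto
  qed
qed

definition complement :: "nat \<Rightarrow> nat list \<Rightarrow> nat list" where
  "complement n s = map (\<lambda>v. Suc n - v) s"

lemma complement_complement:
  assumes "is_perm n s"
  shows "complement n (complement n s) = s"
  unfolding complement_def map_map o_def
  by (rule map_idI) (use assms in \<open>auto simp: is_perm_def\<close>)

lemma is_perm_complement:
  assumes "is_perm n s"
  shows "is_perm n (complement n s)"
proof -
  have "inj_on (\<lambda>v. Suc n - v) {1..n}"
    by (rule inj_onI) auto
  moreover have "(\<lambda>v. Suc n - v) ` {1..n} = {1..n}"
  proof
    show "{1..n} \<subseteq> (\<lambda>v. Suc n - v) ` {1..n}"
    proof
      fix x assume "x \<in> {1..n}"
      then have "Suc n - x \<in> {1..n}" "x = Suc n - (Suc n - x)"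
        by auto
      then show "x \<in> (\<lambda>v. Suc n - v) ` {1..n}"
        by blast
    qed
  qed auto
  ultimately show ?thesis
    using assms unfolding is_perm_def complement_def by (simp add: distinct_map)
qed

lemma occurrences_rev_pattern_rel:
  assumes "is_perm m p" "is_perm n s"
  shows "occurrences m (pattern_rel m (rev p)) s = occurrences m (rc_rel m (pattern_rel m p)) (complement n s)"
proof -
  have p: "length p = m" and s: "length s = n" "set s = {1..n}"
    using assms unfolding is_perm_def by auto
  have swap: "(complement n s ! (j + x) < complement n s ! (j + y)) = rc_rel m (pattern_rel m p) x y
      \<longleftrightarrow> (s ! (j + y) < s ! (j + x)) = pattern_rel m (rev p) y x"
    if "x < m" "y < m" "j + m \<le> n" for j x y
  proof -
    have "s ! (j + x) \<in> {1..n}" "s ! (j + y) \<in> {1..n}"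
      using that s nth_mem[of "j + x" s] nth_mem[of "j + y" s] by auto
    then have "(complement n s ! (j + x) < complement n s ! (j + y)) = (s ! (j + y) < s ! (j + x))"
      using that s unfolding complement_def by auto
    moreover have "rc_rel m (pattern_rel m p) x y = pattern_rel m (rev p) y x"
      unfolding rc_rel_def pattern_rel_def using that p by (auto simp: rev_nth)
    ultimately show ?thesis
      by simp
  qed
  have "occurs_at m (pattern_rel m (rev p)) s j \<longleftrightarrow>
      occurs_at m (rc_rel m (pattern_rel m p)) (complement n s) j" for j
  proof (cases "j + m \<le> n")
    case True
    then show ?thesis
      unfolding occurs_at_def using swap[OF _ _ True] s(1) by (auto simp: complement_def)
  qed (use s(1) in \<open>simp add: occurs_at_def complement_def\<close>)
  then show ?thesis
    unfolding occurrences_def by blast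
qed

lemma card_perms_occurrences_rev_pattern_rel:
  assumes "is_perm m p"
  shows "card {s. is_perm n s \<and> occurrences m (pattern_rel m (rev p)) s = U} =
    card {s. is_perm n s \<and> occurrences m (rc_rel m (pattern_rel m p)) s = U}"
proof (rule card_eq_by_involution[of "complement n"])
  have "occurrences m (pattern_rel m (rev p)) (complement n s) = occurrences m (rc_rel m (pattern_rel m p)) s"
    if "is_perm n s" for s
    using occurrences_rev_pattern_rel[OF assms is_perm_complement[OF that]] complement_complement[OF that]
    by simp
  then show "complement n ` {s. is_perm n s \<and> occurrences m (rc_rel m (pattern_rel m p)) s = U}
      \<subseteq> {s. is_perm n s \<and> occurrences m (pattern_rel m (rev p)) s = U}"
    using is_perm_complement by auto
  show "complement n ` {s. is_perm n s \<and> occurrences m (pattern_rel m (rev p)) s = U}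
      \<subseteq> {s. is_perm n s \<and> occurrences m (rc_rel m (pattern_rel m p)) s = U}"
    using is_perm_complement occurrences_rev_pattern_rel[OF assms] by auto
qed (auto simp: complement_complement)

lemma Suc_image_eq_iff: "Suc ` A = S \<longleftrightarrow> 0 \<notin> S \<and> A = Suc -` S"
proof
  assume "0 \<notin> S \<and> A = Suc -` S"
  then show "Suc ` A = S"
    by (auto simp: image_iff) (metis not0_implies_Suc)
qed auto

lemma a_count_eq_card_occurrences:
  assumes "is_perm m q"
  shows "a_count q n S = (if 0 \<in> S then 0
    else card {s. is_perm n s \<and> occurrences m (pattern_rel m q) s = Suc -` S})"
proof -
  have "a_count q n S = card {s. is_perm n s \<and> Suc ` occurrences m (pattern_rel m q) s = S}"
    unfolding a_count_def using Em_eq_Suc_occurrences[OF assms] by (metis (lifting))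
  then show ?thesis
    unfolding Suc_image_eq_iff by auto
qed

theorem theorem5p6:
  fixes m :: nat and p :: "nat list"
  assumes "is_perm m p"
    and "p ! 0 = 1"
    and "p ! (m - 1) = m"
    and "card (overlap_set p) = 2"
  shows "super_strongly_cWilf_equiv p (rev p)"
proof -
  obtain k where k: "0 < k" "k + 2 \<le> m"
    and unique: "\<forall>d. 1 \<le> d \<longrightarrow> d + 2 \<le> m \<longrightarrow> self_overlap m (pattern_rel m p) d \<longrightarrow> d = k"
    using unique_nontrivial_self_overlap[OF assms(1,4)] by blast
  have "card {s. is_perm n s \<and> occurrences m (pattern_rel m p) s = U} =
      card {s. is_perm n s \<and> occurrences m (pattern_rel m (rev p)) s = U}" for n U
    using card_perms_occurrences_rc_rel[OF k min_first_max_last_pattern_rel[OF assms(1-3)]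
        bounded_rel_pattern_rel unique]
      card_perms_occurrences_rev_pattern_rel[OF assms(1)]
    by simp
  moreover have "is_perm m (rev p)"
    using assms(1) by (simp add: is_perm_def)
  ultimately show ?thesis
    unfolding super_strongly_cWilf_equiv_def a_count_eq_card_occurrences[OF assms(1)]
      a_count_eq_card_occurrences[OF \<open>is_perm m (rev p)\<close>]
    by simp
qed

end
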